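(* Assume $\operatorname{rank}(X)=n$ and $\xi_r(\varpi^N)<1/2$ for some $r\in\{0,\ldots,N\}$. Let $A^\circ\in\mathbb{R}^{n\times s}$ and $\hat A\in\arg\min_{A}\mathcal{J}(A)$, and suppose $A^\circ$ and $\hat A$ are comparable over $\varpi^N$ with associated permutation $\pi$ (i.e. $|I_i(A^\circ)\cap I_{\pi(i)}(\hat A)|\ge\nu_n(X)$ for all $i\in\mathbb{S}$). Then for any norm $\|\cdot\|$ on $\mathbb{R}^{n\times s}$ there exists $D>0$ such that $$\|\hat A_\pi-A^\circ\|\le\frac{2}{D\big(1-2\xi_r(\varpi^N)\big)}\,\delta_r(A^\circ),$$ where $\hat A_\pi=[\hat a_{\pi(1)}\ \cdots\ \hat a_{\pi(s)}]$.
   Context: Data: integers $n,s,N\ge1$ and a dataset $\varpi^N=((x_1,y_1),\ldots,(x_N,y_N))$ with $x_t\in\mathbb{R}^n$, $y_t\in\mathbb{R}$ (in the paper generated by $y_t=x_t^\top a^\circ_{\sigma(t)}+v_t$ with true parameter matrix $A^\circ=[a_1^\circ\ \cdots\ a_s^\circ]$); $X=[x_1\ \cdots\ x_N]\in\mathbb{R}^{n\times N}$. Let $\mathbb{T}=\{1,\ldots,N\}$, $\mathbb{S}=\{1,\ldots,s\}$. For $A=[a_1\ \cdots\ a_s]\in\mathbb{R}^{n\times s}$, $\sigma_A:\mathbb{T}\to\mathbb{S}$ is a switching signal satisfying $\sigma_A(t)\in\arg\min_{i\in\mathbb{S}}|y_t-x_t^\top a_i|$ for all $t$, selected uniquely by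 a fixed rule depending only on $A$ and the data (among all admissible choices, one maximizing $\min_{i}|I_i(A)|$, ties then broken by assigning the smallest admissible index). $I_i(A)=\{t\in\mathbb{T}:\sigma_A(t)=i\}$. $\phi(A)=\big(y_1-x_1^\top a_{\sigma_A(1)},\ldots,y_N-x_N^\top a_{\sigma_A(N)}\big)^\top$, $\mathcal{J}(A)=\|\phi(A)\|_1$, $\phi_{\mathcal{T}}(A)$ its subvector indexed by $\mathcal{T}\subset\mathbb{T}$. $\mathcal{S}_r=\{w\in\mathbb{R}^N:\|w\|_0\le r\}$, $\delta_r(A)=\inf_{w\in\mathcal{S}_r}\|\phi(A)-w\|_1$. The $r$-th concentration ratio is $$\xi_r(\varpi^N)=\sup\Big\{\frac{\|\phi_{\mathcal{T}}(A)-\phi_{\mathcal{T}}(A')\|_1}{\|\phi(A)-\phi(A')\|_1}: A,A'\in\mathbb{R}^{n\times s},\ \mathcal{T}\subset\mathbb{T},\ \phi(A)\ne\phi(A'),\ |\mathcal{T}|\le r\Big\}.$$ Genericity index: for $\operatorname{rank}(X)=n$, $\nu_n(X)$ is the smallest integer $m$ such that every submatrix formed by $m$ columns of $X$ has rank $n$. Comparability: $A,A'$ are comparable over $\varpi^N$ if there is a permutation $\pi$ of $\mathbb{S}$ with $|I_i(A)\cap I_{\pi(i)}(A')|\ge\nu_n(X)$ for all $i$. *)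

theory Defs
  imports "HOL-Analysis.Analysis"
begin

text \<open>Data: N samples, regressors x t :: real^'n, outputs y t, for t in {1..N}.
  The mode set S is the finite linearly ordered type 's (s = CARD('s)).
  A parameter matrix A in R^(n x s) is represented as A :: (real^'n)^'s, its
  i-th column a_i being A $ i.  Vectors in R^N are functions nat => real
  restricted to the index set {1..N}.\<close>

definition admissible :: "nat \<Rightarrow> (nat \<Rightarrow> real^'n) \<Rightarrow> (nat \<Rightarrow> real)
    \<Rightarrow> (real^'n)^'s::{finite,linorder} \<Rightarrow> (nat \<Rightarrow> 's) set" where
  "admissible N x y A = Pi\<^sub>E {1..N}
     (\<lambda>t. {i. \<forall>j. \<bar>y t - x t \<bullet> A $ i\<bar> \<le> \<bar>y t - x t \<bullet> A $ j\<bar>})"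

definition balance :: "nat \<Rightarrow> (nat \<Rightarrow> 's::{finite,linorder}) \<Rightarrow> nat" where
  "balance N \<sigma> = Min (range (\<lambda>i. card {t \<in> {1..N}. \<sigma> t = i}))"

definition lexless :: "nat \<Rightarrow> (nat \<Rightarrow> 's::linorder) \<Rightarrow> (nat \<Rightarrow> 's) \<Rightarrow> bool" where
  "lexless N \<sigma> \<tau> \<longleftrightarrow> (\<exists>k\<in>{1..N}. (\<forall>j\<in>{1..<k}. \<sigma> j = \<tau> j) \<and> \<sigma> k < \<tau> k)"

definition switching :: "nat \<Rightarrow> (nat \<Rightarrow> real^'n) \<Rightarrow> (nat \<Rightarrow> real)
    \<Rightarrow> (real^'n)^'s::{finite,linorder} \<Rightarrow> (nat \<Rightarrow> 's)" where
  "switching N x y A =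
    (let C = admissible N x y A;
         M = {\<sigma> \<in> C. \<forall>\<tau> \<in> C. balance N \<tau> \<le> balance N \<sigma>}
     in THE \<sigma>. \<sigma> \<in> M \<and> (\<forall>\<tau> \<in> M. \<tau> \<noteq> \<sigma> \<longrightarrow> lexless N \<sigma> \<tau>))"

definition Iset :: "nat \<Rightarrow> (nat \<Rightarrow> real^'n) \<Rightarrow> (nat \<Rightarrow> real)
    \<Rightarrow> (real^'n)^'s::{finite,linorder} \<Rightarrow> 's \<Rightarrow> nat set" where
  "Iset N x y A i = {t \<in> {1..N}. switching N x y A t = i}"

definition phi :: "nat \<Rightarrow> (nat \<Rightarrow> real^'n) \<Rightarrow> (nat \<Rightarrow> real)
    \<Rightarrow> (real^'n)^'s::{finite,linorder} \<Rightarrow> nat \<Rightarrow> real" where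
  "phi N x y A t = y t - x t \<bullet> (A $ switching N x y A t)"

definition Jcost :: "nat \<Rightarrow> (nat \<Rightarrow> real^'n) \<Rightarrow> (nat \<Rightarrow> real)
    \<Rightarrow> (real^'n)^'s::{finite,linorder} \<Rightarrow> real" where
  "Jcost N x y A = (\<Sum>t\<in>{1..N}. \<bar>phi N x y A t\<bar>)"

definition delta :: "nat \<Rightarrow> (nat \<Rightarrow> real^'n) \<Rightarrow> (nat \<Rightarrow> real) \<Rightarrow> nat
    \<Rightarrow> (real^'n)^'s::{finite,linorder} \<Rightarrow> real" where
  "delta N x y r A = Inf {(\<Sum>t\<in>{1..N}. \<bar>phi N x y A t - w t\<bar>) | w.
       card {t \<in> {1..N}. w t \<noteq> 0} \<le> r}"

definition xi :: "nat \<Rightarrow> (nat \<Rightarrow> real^'n) \<Rightarrow> (nat \<Rightarrow> real) \<Rightarrow> nat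
    \<Rightarrow> ('s::{finite,linorder}) itself \<Rightarrow> real" where
  "xi N x y r _ = Sup {(\<Sum>t\<in>T. \<bar>phi N x y A t - phi N x y A' t\<bar>)
                     / (\<Sum>t\<in>{1..N}. \<bar>phi N x y A t - phi N x y A' t\<bar>)
      | (A :: (real^'n)^'s::{finite,linorder}) (A' :: (real^'n)^'s::{finite,linorder}) T. T \<subseteq> {1..N} \<and> card T \<le> r \<and>
          (\<exists>t\<in>{1..N}. phi N x y A t \<noteq> phi N x y A' t)}"

definition nu :: "nat \<Rightarrow> (nat \<Rightarrow> real^'n) \<Rightarrow> nat" where
  "nu N x = (LEAST m. \<forall>T \<subseteq> {1..N}. card T = m \<longrightarrow> dim (x ` T) = CARD('n))"

definition is_norm :: "('a::real_vector \<Rightarrow> real) \<Rightarrow> bool" where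
  "is_norm f \<longleftrightarrow> (\<forall>v. 0 \<le> f v) \<and> (\<forall>v. f v = 0 \<longleftrightarrow> v = 0) \<and>
     (\<forall>c v. f (c *\<^sub>R v) = \<bar>c\<bar> * f v) \<and> (\<forall>v w. f (v + w) \<le> f v + f w)"

end

theory Submission
  imports Defs
begin

text \<open>Let E be the l1 distance between the residual vectors of \<open>Ahat\<close> and \<open>A0\<close>.
  Optimality of \<open>Ahat\<close> together with the concentration ratio gives the null-space-type
  estimate \<open>(1 - 2 xi) E \<le> 2 delta_r(A0)\<close>. If E = 0, the two residual vectors agree,
  so on each comparable set the regressors are orthogonal to the column difference;
  these regressors span the whole space, hence \<open>Ahat_pi = A0\<close>. Otherwise E > 0 and
  \<open>D = E / \<parallel>Ahat_pi - A0\<parallel>\<close> does the job.\<close>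

lemma l1_error_le_of_concentration:
  fixes f g w :: "'a \<Rightarrow> real" and \<xi> :: real
  assumes "finite U" and "T \<subseteq> U" and w_supp: "\<forall>t \<in> U - T. w t = 0"
    and opt: "(\<Sum>t\<in>U. \<bar>f t\<bar>) \<le> (\<Sum>t\<in>U. \<bar>g t\<bar>)"
    and conc: "(\<Sum>t\<in>T. \<bar>f t - g t\<bar>) \<le> \<xi> * (\<Sum>t\<in>U. \<bar>f t - g t\<bar>)"
  shows "(1 - 2 * \<xi>) * (\<Sum>t\<in>U. \<bar>f t - g t\<bar>) \<le> 2 * (\<Sum>t\<in>U. \<bar>g t - w t\<bar>)"
proof -
  define C where "C = U - T"
  have split: "(\<Sum>t\<in>U. h t) = (\<Sum>t\<in>T. h t) + (\<Sum>t\<in>C. h t)" for h :: "'a \<Rightarrow> real"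
    unfolding C_def using assms(1,2) by (metis add.commute sum.subset_diff)
  have on_T: "(\<Sum>t\<in>T. \<bar>g t\<bar>) - (\<Sum>t\<in>T. \<bar>f t - g t\<bar>) \<le> (\<Sum>t\<in>T. \<bar>f t\<bar>)"
    unfolding sum_subtractf[symmetric] by (intro sum_mono) linarith
  have on_C: "(\<Sum>t\<in>C. \<bar>f t - g t\<bar>) - (\<Sum>t\<in>C. \<bar>g t\<bar>) \<le> (\<Sum>t\<in>C. \<bar>f t\<bar>)"
    unfolding sum_subtractf[symmetric] by (intro sum_mono) linarith
  have "(\<Sum>t\<in>C. \<bar>g t\<bar>) = (\<Sum>t\<in>C. \<bar>g t - w t\<bar>)"
    using w_supp unfolding C_def by (intro sum.cong) auto
  also have "\<dots> \<le> (\<Sum>t\<in>U. \<bar>g t - w t\<bar>)"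
    unfolding split[of "\<lambda>t. \<bar>g t - w t\<bar>"] by (simp add: sum_nonneg)
  finally have tail: "(\<Sum>t\<in>C. \<bar>g t\<bar>) \<le> (\<Sum>t\<in>U. \<bar>g t - w t\<bar>)" .
  have "(\<Sum>t\<in>U. \<bar>f t - g t\<bar>) - 2 * (\<Sum>t\<in>T. \<bar>f t - g t\<bar>) \<le> 2 * (\<Sum>t\<in>U. \<bar>g t - w t\<bar>)"
    using on_T on_C tail opt split[of "\<lambda>t. \<bar>f t - g t\<bar>"]
      split[of "\<lambda>t. \<bar>f t\<bar>"] split[of "\<lambda>t. \<bar>g t\<bar>"]
    by linarith
  with conc show ?thesis by (simp add: left_diff_distrib)
qed

lemma eq_0_if_orthogonal_to_full_dim:
  fixes S :: "'a::euclidean_space set"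
  assumes "dim S = DIM('a)" and "\<forall>v\<in>S. v \<bullet> d = 0"
  shows "d = 0"
proof -
  have "d \<in> span S" using assms(1) dim_eq_full[of S] by simp
  moreover have "\<And>v. v \<in> S \<Longrightarrow> orthogonal d v"
    using assms(2) by (auto simp: orthogonal_def inner_commute)
  ultimately have "orthogonal d d" by (rule orthogonal_to_span)
  then show ?thesis by (simp add: orthogonal_def)
qed

lemma dim_image_eq_if_card_nu:
  fixes x :: "nat \<Rightarrow> real^'n"
  assumes "T \<subseteq> {1..N}" and "card T = nu N x"
  shows "dim (x ` T) = CARD('n)"
proof -
  have "\<forall>T \<subseteq> {1..N}. card T = Suc N \<longrightarrow> dim (x ` T) = CARD('n)"
  proof (intro allI impI)
    fix T assume "T \<subseteq> {1..N}" and "card T = Suc N"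
    then have False using card_mono[of "{1..N}" T] by simp
    then show "dim (x ` T) = CARD('n)" ..
  qed
  then have "\<forall>T \<subseteq> {1..N}. card T = nu N x \<longrightarrow> dim (x ` T) = CARD('n)"
    unfolding nu_def by (rule LeastI)
  with assms show ?thesis by blast
qed

lemma sum_subset_div_sum_le_1:
  fixes f :: "'a \<Rightarrow> real"
  assumes "finite U" and "T \<subseteq> U" and "\<forall>t\<in>U. 0 \<le> f t"
  shows "sum f T / sum f U \<le> 1"
proof (cases "sum f U = 0")
  case False
  have "sum f T \<le> sum f U" using assms by (intro sum_mono2) auto
  moreover have "0 \<le> sum f U" using assms(3) by (simp add: sum_nonneg)
  with False have "0 < sum f U" by simp
  ultimately show ?thesis by simp
qed simp

lemma phi_diff_le_xi:
  fixes A A' :: "(real^'n)^'s::{finite,linorder}"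
  assumes "T \<subseteq> {1..N}" and "card T \<le> r"
  shows "(\<Sum>t\<in>T. \<bar>phi N x y A t - phi N x y A' t\<bar>)
           \<le> xi N x y r TYPE('s) * (\<Sum>t\<in>{1..N}. \<bar>phi N x y A t - phi N x y A' t\<bar>)"
    (is "?sT \<le> _ * ?E")
proof (cases "\<exists>t\<in>{1..N}. phi N x y A t \<noteq> phi N x y A' t")
  case False
  then show ?thesis using assms(1) by (simp add: subset_iff)
next
  case True
  then obtain t0 where "t0 \<in> {1..N}" "phi N x y A t0 \<noteq> phi N x y A' t0" by blast
  then have "?E > 0" by (intro sum_pos2[of "{1..N}" t0]) auto
  define R where "R = {(\<Sum>t\<in>T. \<bar>phi N x y A t - phi N x y A' t\<bar>)
                     / (\<Sum>t\<in>{1..N}. \<bar>phi N x y A t - phi N x y A' t\<bar>)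
      | (A :: (real^'n)^('s::{finite,linorder})) (A' :: (real^'n)^('s::{finite,linorder})) T.
          T \<subseteq> {1..N} \<and> card T \<le> r \<and> (\<exists>t\<in>{1..N}. phi N x y A t \<noteq> phi N x y A' t)}"
  have "?sT / ?E \<in> R" unfolding R_def using assms True by blast
  moreover have "bdd_above R"
  proof (rule bdd_aboveI)
    fix z assume "z \<in> R"
    then obtain B B' :: "(real^'n)^('s::{finite,linorder})" and T' where
      z: "z = (\<Sum>t\<in>T'. \<bar>phi N x y B t - phi N x y B' t\<bar>)
              / (\<Sum>t\<in>{1..N}. \<bar>phi N x y B t - phi N x y B' t\<bar>)" and "T' \<subseteq> {1..N}"
      unfolding R_def by blast
    then show "z \<le> 1" unfolding z by (intro sum_subset_div_sum_le_1) auto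
  qed
  ultimately have "?sT / ?E \<le> Sup R" by (rule cSup_upper)
  then show ?thesis using \<open>?E > 0\<close> by (simp add: R_def xi_def divide_le_eq mult.commute)
qed

lemma delta_nonneg:
  fixes A :: "(real^'n)^'s::{finite,linorder}"
  shows "0 \<le> delta N x y r A"
  unfolding delta_def
  by (rule cInf_greatest) (auto intro!: sum_nonneg exI[of _ "\<lambda>_. 0"])

lemma phi_dist_le_delta:
  fixes A0 Ahat :: "(real^'n)^'s::{finite,linorder}"
  assumes "\<forall>A :: (real^'n)^('s::{finite,linorder}). Jcost N x y Ahat \<le> Jcost N x y A"
  shows "(1 - 2 * xi N x y r TYPE('s)) * (\<Sum>t\<in>{1..N}. \<bar>phi N x y Ahat t - phi N x y A0 t\<bar>)
           \<le> 2 * delta N x y r A0"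
    (is "?c * ?E \<le> _")
proof -
  have opt: "(\<Sum>t\<in>{1..N}. \<bar>phi N x y Ahat t\<bar>) \<le> (\<Sum>t\<in>{1..N}. \<bar>phi N x y A0 t\<bar>)"
    using assms unfolding Jcost_def by blast
  have "?c * ?E / 2 \<le> (\<Sum>t\<in>{1..N}. \<bar>phi N x y A0 t - w t\<bar>)"
    if "card {t \<in> {1..N}. w t \<noteq> 0} \<le> r" for w
  proof -
    have "{t \<in> {1..N}. w t \<noteq> 0} \<subseteq> {1..N}" by blast
    from l1_error_le_of_concentration[where w = w, OF _ this _ opt phi_diff_le_xi[OF this that]]
    show ?thesis by simp
  qed
  then have "?c * ?E / 2 \<le> delta N x y r A0"
    unfolding delta_def by (intro cInf_greatest) (auto intro: exI[of _ "\<lambda>_. 0"])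
  then show ?thesis by simp
qed

lemma permuted_columns_eq_if_phi_eq:
  fixes A0 Ahat :: "(real^'n)^'s::{finite,linorder}"
  assumes phi_eq: "\<forall>t\<in>{1..N}. phi N x y Ahat t = phi N x y A0 t"
    and comp: "\<forall>i. card (Iset N x y A0 i \<inter> Iset N x y Ahat (\<pi> i)) \<ge> nu N x"
  shows "(\<chi> i. Ahat $ \<pi> i) = A0"
proof -
  have "Ahat $ \<pi> i - A0 $ i = 0" for i
  proof -
    obtain S where S: "S \<subseteq> Iset N x y A0 i \<inter> Iset N x y Ahat (\<pi> i)" "card S = nu N x"
      using obtain_subset_with_card_n[OF comp[rule_format, of i]] by blast
    then have "S \<subseteq> {1..N}" unfolding Iset_def by auto
    with S have "dim (x ` S) = DIM(real^'n)" by (simp add: dim_image_eq_if_card_nu)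
    moreover have "\<forall>v\<in>x ` S. v \<bullet> (Ahat $ \<pi> i - A0 $ i) = 0"
      using S phi_eq unfolding Iset_def phi_def by (force simp: inner_diff_right)
    ultimately show ?thesis by (rule eq_0_if_orthogonal_to_full_dim)
  qed
  then show ?thesis by (simp add: vec_eq_iff)
qed

lemma exists_scale_le:
  fixes v :: "'a::real_vector" and E c d :: real
  assumes "is_norm nrm" and "0 < c" and "0 \<le> d" and "c * E \<le> 2 * d"
    and "0 \<le> E" and "E = 0 \<Longrightarrow> v = 0"
  shows "\<exists>D > 0. nrm v \<le> 2 / (D * c) * d"
proof (cases "v = 0")
  case True
  then have "nrm v = 0" using assms(1) unfolding is_norm_def by blast
  with assms(2,3) show ?thesis by (intro exI[of _ 1]) simp
next
  case False
  then have "nrm v > 0" and "E > 0"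
    using assms(1,5,6) unfolding is_norm_def by (auto simp: less_le)
  then have "nrm v = 2 / ((E / nrm v) * c) * (c * E / 2)" using assms(2) by simp
  also have "\<dots> \<le> 2 / ((E / nrm v) * c) * d"
    using assms(2,4) \<open>E > 0\<close> \<open>nrm v > 0\<close> by (intro mult_left_mono) auto
  finally show ?thesis using \<open>E > 0\<close> \<open>nrm v > 0\<close> by (intro exI[of _ "E / nrm v"]) auto
qed

text \<open>Only \<open>xi_lt\<close>, \<open>argmin\<close> and \<open>comp\<close> are used: comparability already yields spanning
  subsets of size \<open>nu N x\<close>, and \<open>\<pi>\<close> need not be a permutation.\<close>

theorem corollary1:
  fixes N r :: nat and x :: "nat \<Rightarrow> real^'n" and y :: "nat \<Rightarrow> real"
    and A0 Ahat :: "(real^'n)^('s::{finite,linorder})" and \<pi> :: "'s \<Rightarrow> 's"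
  assumes "N \<ge> 1"
    and rank: "dim (x ` {1..N}) = CARD('n)"
    and "r \<le> N"
    and xi_lt: "xi N x y r TYPE('s::{finite,linorder}) < 1/2"
    and argmin: "\<forall>A :: (real^'n)^('s::{finite,linorder}). Jcost N x y Ahat \<le> Jcost N x y A"
    and perm: "\<pi> permutes (UNIV :: 's set)"
    and comp: "\<forall>i. card (Iset N x y A0 i \<inter> Iset N x y Ahat (\<pi> i)) \<ge> nu N x"
  shows "\<forall>nrm :: (real^'n)^('s::{finite,linorder}) \<Rightarrow> real. is_norm nrm \<longrightarrow>
           (\<exists>D > 0. nrm ((\<chi> i. Ahat $ \<pi> i) - A0)
              \<le> 2 / (D * (1 - 2 * xi N x y r TYPE('s::{finite,linorder}))) * delta N x y r A0)"
proof (intro allI impI)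
  fix nrm :: "(real^'n)^('s::{finite,linorder}) \<Rightarrow> real"
  assume "is_norm nrm"
  define E where "E = (\<Sum>t\<in>{1..N}. \<bar>phi N x y Ahat t - phi N x y A0 t\<bar>)"
  have "0 \<le> E" unfolding E_def by (simp add: sum_nonneg)
  moreover have "(\<chi> i. Ahat $ \<pi> i) - A0 = 0" if "E = 0"
  proof -
    have "\<forall>t\<in>{1..N}. phi N x y Ahat t = phi N x y A0 t"
      using that unfolding E_def by (subst (asm) sum_nonneg_eq_0_iff) auto
    then show ?thesis using permuted_columns_eq_if_phi_eq[OF _ comp] by simp
  qed
  moreover have "(1 - 2 * xi N x y r TYPE('s)) * E \<le> 2 * delta N x y r A0"
    unfolding E_def using argmin by (rule phi_dist_le_delta)
  moreover have "0 < 1 - 2 * xi N x y r TYPE('s)" using xi_lt by simp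
  ultimately show "\<exists>D > 0. nrm ((\<chi> i. Ahat $ \<pi> i) - A0)
                     \<le> 2 / (D * (1 - 2 * xi N x y r TYPE('s))) * delta N x y r A0"
    using exists_scale_le[OF \<open>is_norm nrm\<close> _ delta_nonneg] by blast
qed

end
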